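(* For any positive integer $T$, $x \in \{0,1\}^T$ and $p \in [0,1]^T$, $$\mathsf{smCE}(x,p) \le \left|\sum_{\alpha \in [0,1]} \Delta_\alpha\right| + \sum_{\alpha \in [0,1]} |\alpha - 1/2|\cdot|\Delta_\alpha|,$$ where $\Delta_\alpha = \sum_{t=1}^T (x_t - p_t)\mathbf{1}[p_t = \alpha]$.
   Context: $\mathsf{smCE}(x,p) = \sup_{f \in \mathcal{F}} \sum_{t=1}^T f(p_t)(x_t - p_t)$, where $\mathcal{F}$ is the family of $1$-Lipschitz functions from $[0,1]$ to $[-1,1]$. Sums over $\alpha \in [0,1]$ have only finitely many nonzero terms. *)

theory Defs
  imports "HOL-Analysis.Analysis"
begin

definition lipF :: "(real \<Rightarrow> real) set" where
  "lipF = {f. (\<forall>a\<in>{0..1}. f a \<in> {-1..1}) \<and>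
              (\<forall>a\<in>{0..1}. \<forall>b\<in>{0..1}. \<bar>f a - f b\<bar> \<le> \<bar>a - b\<bar>)}"

definition smCE :: "nat \<Rightarrow> (nat \<Rightarrow> real) \<Rightarrow> (nat \<Rightarrow> real) \<Rightarrow> real" where
  "smCE T x p = (SUP f\<in>lipF. \<Sum>t=1..T. f (p t) * (x t - p t))"

definition Delta :: "nat \<Rightarrow> (nat \<Rightarrow> real) \<Rightarrow> (nat \<Rightarrow> real) \<Rightarrow> real \<Rightarrow> real" where
  "Delta T x p \<alpha> = (\<Sum>t=1..T. (x t - p t) * (if p t = \<alpha> then 1 else 0))"

text \<open>Sum over \<alpha> \<in> [0,1] of a function with finitely many nonzero terms:
  summed over its support in [0,1].\<close>
definition sum01 :: "(real \<Rightarrow> real) \<Rightarrow> real" where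
  "sum01 g = sum g {\<alpha>\<in>{0..1}. g \<alpha> \<noteq> 0}"

end

theory Submission
  imports Defs
begin

text \<open>Grouping the times by the value of the forecast gives
  \<open>\<Sum>\<^sub>t f(p\<^sub>t)(x\<^sub>t - p\<^sub>t) = \<Sum>\<^sub>\<alpha> f(\<alpha>) \<Delta>\<^sub>\<alpha>\<close>. Splitting \<open>f(\<alpha>) = f(1/2) + (f(\<alpha>) - f(1/2))\<close>,
  the constant part contributes at most \<open>|\<Sum>\<^sub>\<alpha> \<Delta>\<^sub>\<alpha>|\<close> because \<open>|f(1/2)| \<le> 1\<close>, and the
  remainder at most \<open>\<Sum>\<^sub>\<alpha> |\<alpha> - 1/2| |\<Delta>\<^sub>\<alpha>|\<close> because \<open>f\<close> is 1-Lipschitz.\<close>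

lemma Delta_eq_0_outside_range:
  assumes "\<alpha> \<notin> p ` {1..T}"
  shows "Delta T x p \<alpha> = 0"
  using assms unfolding Delta_def by (intro sum.neutral) auto

lemma sum_residuals_eq_sum_Delta:
  fixes h :: "real \<Rightarrow> real"
  shows "(\<Sum>t=1..T. h (p t) * (x t - p t)) = (\<Sum>\<alpha>\<in>p ` {1..T}. h \<alpha> * Delta T x p \<alpha>)"
proof -
  have "(\<Sum>t=1..T. h (p t) * (x t - p t)) =
      (\<Sum>\<alpha>\<in>p ` {1..T}. \<Sum>t\<in>{t\<in>{1..T}. p t = \<alpha>}. h (p t) * (x t - p t))"
    by (rule sum.image_gen) simp
  also have "\<dots> = (\<Sum>\<alpha>\<in>p ` {1..T}. h \<alpha> * (\<Sum>t\<in>{t\<in>{1..T}. p t = \<alpha>}. x t - p t))"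
    by (simp add: sum_distrib_left)
  also have "\<dots> = (\<Sum>\<alpha>\<in>p ` {1..T}. h \<alpha> * Delta T x p \<alpha>)"
    unfolding Delta_def by (simp add: sum.inter_filter[symmetric] if_distrib cong: if_cong)
  finally show ?thesis .
qed

lemma sum01_eq_sum:
  assumes "A \<subseteq> {0..1}" "finite A" "\<And>\<alpha>. g \<alpha> \<noteq> 0 \<Longrightarrow> \<alpha> \<in> A"
  shows "sum01 g = sum g A"
  unfolding sum01_def by (rule sum.mono_neutral_left) (use assms in auto)

lemma lipschitz_weighted_sum_le:
  fixes f D :: "real \<Rightarrow> real"
  assumes "\<bar>f c\<bar> \<le> 1" and "\<And>\<alpha>. \<alpha> \<in> A \<Longrightarrow> \<bar>f \<alpha> - f c\<bar> \<le> \<bar>\<alpha> - c\<bar>"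
  shows "(\<Sum>\<alpha>\<in>A. f \<alpha> * D \<alpha>) \<le> \<bar>sum D A\<bar> + (\<Sum>\<alpha>\<in>A. \<bar>\<alpha> - c\<bar> * \<bar>D \<alpha>\<bar>)"
proof -
  have "(\<Sum>\<alpha>\<in>A. f \<alpha> * D \<alpha>) = f c * sum D A + (\<Sum>\<alpha>\<in>A. (f \<alpha> - f c) * D \<alpha>)"
    by (simp add: sum_distrib_left sum_subtractf left_diff_distrib)
  also have "f c * sum D A \<le> \<bar>f c\<bar> * \<bar>sum D A\<bar>"
    by (metis abs_ge_self abs_mult)
  also have "\<dots> \<le> \<bar>sum D A\<bar>"
    using assms(1) by (simp add: mult_left_le_one_le)
  also have "(\<Sum>\<alpha>\<in>A. (f \<alpha> - f c) * D \<alpha>) \<le> (\<Sum>\<alpha>\<in>A. \<bar>\<alpha> - c\<bar> * \<bar>D \<alpha>\<bar>)"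
  proof (rule sum_mono)
    fix \<alpha> assume "\<alpha> \<in> A"
    have "(f \<alpha> - f c) * D \<alpha> \<le> \<bar>f \<alpha> - f c\<bar> * \<bar>D \<alpha>\<bar>"
      by (metis abs_ge_self abs_mult)
    also have "\<dots> \<le> \<bar>\<alpha> - c\<bar> * \<bar>D \<alpha>\<bar>"
      using assms(2)[OF \<open>\<alpha> \<in> A\<close>] by (simp add: mult_right_mono)
    finally show "(f \<alpha> - f c) * D \<alpha> \<le> \<bar>\<alpha> - c\<bar> * \<bar>D \<alpha>\<bar>" .
  qed
  finally show ?thesis by simp
qed

lemma lipF_nonempty: "lipF \<noteq> {}"
proof -
  have "(\<lambda>_. 0) \<in> lipF" by (simp add: lipF_def)
  then show ?thesis by blast
qed

theorem lemma6:
  fixes T :: nat and x p :: "nat \<Rightarrow> real"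
  assumes "T \<ge> 1"
    and "\<forall>t\<in>{1..T}. x t \<in> {0, 1}"
    and "\<forall>t\<in>{1..T}. p t \<in> {0..1}"
  shows "smCE T x p \<le> \<bar>sum01 (Delta T x p)\<bar>
           + sum01 (\<lambda>\<alpha>. \<bar>\<alpha> - 1/2\<bar> * \<bar>Delta T x p \<alpha>\<bar>)"
proof -
  define P where "P = p ` {1..T}"
  have P: "P \<subseteq> {0..1}" "finite P" using assms(3) by (auto simp: P_def)
  have bound: "(\<Sum>t=1..T. f (p t) * (x t - p t))
      \<le> \<bar>sum (Delta T x p) P\<bar> + (\<Sum>\<alpha>\<in>P. \<bar>\<alpha> - 1/2\<bar> * \<bar>Delta T x p \<alpha>\<bar>)"
    if "f \<in> lipF" for f
  proof -
    have "f (1/2) \<in> {-1..1}"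
      using \<open>f \<in> lipF\<close> unfolding lipF_def by auto
    then have "\<bar>f (1/2)\<bar> \<le> 1" by auto
    moreover have "\<bar>f \<alpha> - f (1/2)\<bar> \<le> \<bar>\<alpha> - 1/2\<bar>" if "\<alpha> \<in> P" for \<alpha>
      using \<open>f \<in> lipF\<close> P(1) that by (auto simp: lipF_def)
    ultimately show ?thesis
      unfolding sum_residuals_eq_sum_Delta P_def[symmetric]
      by (intro lipschitz_weighted_sum_le) auto
  qed
  have "smCE T x p \<le> \<bar>sum (Delta T x p) P\<bar> + (\<Sum>\<alpha>\<in>P. \<bar>\<alpha> - 1/2\<bar> * \<bar>Delta T x p \<alpha>\<bar>)"
    unfolding smCE_def by (rule cSUP_least[OF lipF_nonempty bound])
  moreover have "Delta T x p \<alpha> = 0" if "\<alpha> \<notin> P" for \<alpha>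
    using that Delta_eq_0_outside_range unfolding P_def by blast
  then have "sum01 (Delta T x p) = sum (Delta T x p) P"
    and "sum01 (\<lambda>\<alpha>. \<bar>\<alpha> - 1/2\<bar> * \<bar>Delta T x p \<alpha>\<bar>) = (\<Sum>\<alpha>\<in>P. \<bar>\<alpha> - 1/2\<bar> * \<bar>Delta T x p \<alpha>\<bar>)"
    by (metis (mono_tags, lifting) sum01_eq_sum[OF P] mult_eq_0_iff abs_0)+
  ultimately show ?thesis by simp
qed

end
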